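(* Let $E_{\mathrm{out}}$ be a lazy expression, $\mathcal L$ a finite family of nonempty polyhedra in $\mathbb{R}^n$, and assign to each $C\in\mathcal L$ numbers $\ell_C\le\inf_C[\![E_{\mathrm{out}}]\!]$ and $u_C\ge\sup_C[\![E_{\mathrm{out}}]\!]$; define $\underline A(x)=\sup\{\ell_C: C\in\mathcal L,\,x\in C\}$ and $\overline A(x)=\inf\{u_C: C\in\mathcal L,\,x\in C\}$ ($\sup\emptyset=-\infty$, $\inf\emptyset=+\infty$). (i) Suppose all $\ell_C=\mathrm{LB}(E_{\mathrm{out}},C)$, $u_C=\mathrm{UB}(E_{\mathrm{out}},C)$, and let $\mathcal L'$ be obtained by replacing some $C\in\mathcal L$ by those of $C\cap\{a^\top x\le d\}$ and $C\cap\{a^\top x\ge d\}$ that are nonempty (for some $a\in\mathbb{R}^n$, $d\in\mathbb{R}$), with the children's numbers again given by $\mathrm{LB}$ and $\mathrm{UB}$. (ii) Alternatively, let the new data be obtained by replacing some $\ell_C$ by a larger value still $\le\inf_C[\![E_{\mathrm{out}}]\!]$, or some $u_C$ by a smaller value still $\ge\sup_C[\![E_{\mathrm{out}}]\!]$. In either case the new envelopes $\underline A',\overline A'$ satisfy $\underline A'(x)\ge\underline A(x)$ and $\overline A'(x)\le\overline A(x)$ for all $x\in\mathbb{R}^n$, and $\underline A'\le[\![E_{\mathrm{out}}]\!]\le\overline A'$ still holds.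
   Context: Lazy (scalar) expressions are generated by $E::=\mathtt{Affine}(w,b)\mid\mathtt{Sum}(\{E_i\})\mid\mathtt{Max}(\{E_i\})\mid\mathtt{Scale}(c,E)\mid\mathtt{Bias}(b,E)$ with denotations $[\![\mathtt{Affine}(w,b)]\!](x)=w^\top x+b$, $[\![\mathtt{Sum}]\!]=$ sum, $[\![\mathtt{Max}]\!]=$ pointwise max, $[\![\mathtt{Scale}(c,E)]\!]=c[\![E]\!]$, $[\![\mathtt{Bias}(b,E)]\!]=[\![E]\!]+b$. A polyhedron is a finite intersection of closed halfspaces. Bounds on a nonempty polyhedron $C$ (values in $\mathbb{R}\cup\{\pm\infty\}$, $0\cdot(\pm\infty)=0$): $\mathrm{LB}(\mathtt{Affine}(w,b),C)=\inf_C(w^\top x+b)$, $\mathrm{UB}(\mathtt{Affine}(w,b),C)=\sup_C(w^\top x+b)$; $\mathtt{Sum}$: sums of children's bounds; $\mathtt{Scale}(c,E)$: $(c\,\mathrm{LB},c\,\mathrm{UB})$ if $c\ge0$, $(c\,\mathrm{UB},c\,\mathrm{LB})$ if $c<0$; $\mathtt{Bias}(b,E)$: bounds shifted by $b$; $\mathtt{Max}$: maxima of children's $\mathrm{LB}$ and of their $\mathrm{UB}$. *)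

theory Defs
  imports "HOL-Analysis.Analysis"
begin

text \<open>Lazy scalar expressions over R^n (n given by the finite index type 'n).
  The finite families of children are represented by lists.\<close>

datatype ('n::finite) lexpr =
    Affine "real^'n" real
  | SumE "'n lexpr list"
  | MaxE "'n lexpr list"
  | Scale real "'n lexpr"
  | Bias real "'n lexpr"

fun wf_lexpr :: "('n::finite) lexpr \<Rightarrow> bool" where
  "wf_lexpr (Affine w b) = True"
| "wf_lexpr (SumE Es) = (\<forall>E\<in>set Es. wf_lexpr E)"
| "wf_lexpr (MaxE Es) = (Es \<noteq> [] \<and> (\<forall>E\<in>set Es. wf_lexpr E))"
| "wf_lexpr (Scale c E) = wf_lexpr E"
| "wf_lexpr (Bias b E) = wf_lexpr E"

fun den :: "('n::finite) lexpr \<Rightarrow> real^'n \<Rightarrow> real" where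
  "den (Affine w b) x = w \<bullet> x + b"
| "den (SumE Es) x = sum_list (map (\<lambda>E. den E x) Es)"
| "den (MaxE Es) x = Max (set (map (\<lambda>E. den E x) Es))"
| "den (Scale c E) x = c * den E x"
| "den (Bias b E) x = den E x + b"

text \<open>Bounds (LB, UB) on a set C, in the extended reals (0 * (+-inf) = 0 in ereal).\<close>
fun bnds :: "('n::finite) lexpr \<Rightarrow> (real^'n) set \<Rightarrow> ereal \<times> ereal" where
  "bnds (Affine w b) C =
     ((INF x\<in>C. ereal (w \<bullet> x + b)), (SUP x\<in>C. ereal (w \<bullet> x + b)))"
| "bnds (SumE Es) C =
     (sum_list (map (\<lambda>E. fst (bnds E C)) Es), sum_list (map (\<lambda>E. snd (bnds E C)) Es))"
| "bnds (MaxE Es) C =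
     (Max (set (map (\<lambda>E. fst (bnds E C)) Es)), Max (set (map (\<lambda>E. snd (bnds E C)) Es)))"
| "bnds (Scale c E) C =
     (if 0 \<le> c then (ereal c * fst (bnds E C), ereal c * snd (bnds E C))
      else (ereal c * snd (bnds E C), ereal c * fst (bnds E C)))"
| "bnds (Bias b E) C = (fst (bnds E C) + ereal b, snd (bnds E C) + ereal b)"

definition LB :: "('n::finite) lexpr \<Rightarrow> (real^'n) set \<Rightarrow> ereal" where
  "LB E C = fst (bnds E C)"

definition UB :: "('n::finite) lexpr \<Rightarrow> (real^'n) set \<Rightarrow> ereal" where
  "UB E C = snd (bnds E C)"

text \<open>Envelopes (Sup {} = -inf, Inf {} = +inf in ereal).\<close>
definition lower_env :: "(real^'n) set set \<Rightarrow> ((real^'n) set \<Rightarrow> ereal) \<Rightarrow> real^'n \<Rightarrow> ereal" where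
  "lower_env L lo x = (SUP C\<in>{C\<in>L. x \<in> C}. lo C)"

definition upper_env :: "(real^'n) set set \<Rightarrow> ((real^'n) set \<Rightarrow> ereal) \<Rightarrow> real^'n \<Rightarrow> ereal" where
  "upper_env L up x = (INF C\<in>{C\<in>L. x \<in> C}. up C)"

definition split_step ::
  "('n::finite) lexpr \<Rightarrow> (real^'n) set set \<Rightarrow> ((real^'n) set \<Rightarrow> ereal) \<Rightarrow> ((real^'n) set \<Rightarrow> ereal)
   \<Rightarrow> (real^'n) set set \<Rightarrow> ((real^'n) set \<Rightarrow> ereal) \<Rightarrow> ((real^'n) set \<Rightarrow> ereal) \<Rightarrow> bool" where
  "split_step E L lo up L' lo' up' \<longleftrightarrow>
     (\<forall>C\<in>L. lo C = LB E C \<and> up C = UB E C) \<and>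
     (\<exists>C\<in>L. \<exists>a d. L' = (L - {C}) \<union>
         {D \<in> {C \<inter> {x. a \<bullet> x \<le> d}, C \<inter> {x. a \<bullet> x \<ge> d}}. D \<noteq> {}}) \<and>
     (\<forall>D\<in>L'. lo' D = LB E D \<and> up' D = UB E D)"

definition tighten_step ::
  "('n::finite) lexpr \<Rightarrow> (real^'n) set set \<Rightarrow> ((real^'n) set \<Rightarrow> ereal) \<Rightarrow> ((real^'n) set \<Rightarrow> ereal)
   \<Rightarrow> (real^'n) set set \<Rightarrow> ((real^'n) set \<Rightarrow> ereal) \<Rightarrow> ((real^'n) set \<Rightarrow> ereal) \<Rightarrow> bool" where
  "tighten_step E L lo up L' lo' up' \<longleftrightarrow> L' = L \<and>
     (\<exists>C\<in>L. \<exists>v.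
        (lo C < v \<and> v \<le> (INF x\<in>C. ereal (den E x)) \<and> lo' = lo(C := v) \<and> up' = up) \<or>
        (v < up C \<and> (SUP x\<in>C. ereal (den E x)) \<le> v \<and> up' = up(C := v) \<and> lo' = lo))"

end

theory Submission
  imports Defs
begin

text \<open>By structural induction, LB and UB enclose the denotation on a cell and are antitone in the
  cell. Hence after either step all bounds are still valid, and every old cell C containing x has a
  new cell D containing x whose bounds are at least as tight: D = C itself, or the half of C that
  contains x, on which LB and UB can only improve. Taking sup and inf over the cells containing x
  gives both claims.\<close>

lemma ereal_mult_left_mono_neg:
  fixes a b :: ereal
  assumes "c < 0" "b \<le> a"
  shows "ereal c * a \<le> ereal c * b"
  using assms by (cases a; cases b) (auto simp: mult_left_mono_neg)

lemma Max_image_mono: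
  fixes f g :: "'a \<Rightarrow> 'b::linorder"
  assumes "finite A" "A \<noteq> {}" "\<And>y. y \<in> A \<Longrightarrow> f y \<le> g y"
  shows "Max (f ` A) \<le> Max (g ` A)"
  using assms by (auto intro: order.trans[OF _ Max_ge])

lemma ereal_scale_bounds_mono:
  fixes l u l' u' :: ereal
  assumes "l \<le> l'" "u' \<le> u"
  shows "(if 0 \<le> c then ereal c * l else ereal c * u) \<le> (if 0 \<le> c then ereal c * l' else ereal c * u')
    \<and> (if 0 \<le> c then ereal c * u' else ereal c * l') \<le> (if 0 \<le> c then ereal c * u else ereal c * l)"
  using assms by (auto intro: ereal_mult_left_mono ereal_mult_left_mono_neg)

lemma bnds_enclose_den:
  assumes "wf_lexpr E" "x \<in> C"
  shows "fst (bnds E C) \<le> ereal (den E x) \<and> ereal (den E x) \<le> snd (bnds E C)"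
  using assms(1)
proof (induction E)
  case (Affine w b)
  then show ?case using assms(2) by (auto intro: INF_lower SUP_upper)
next
  case (SumE Es)
  have ereal_sum: "ereal (\<Sum>E\<leftarrow>Es. den E x) = (\<Sum>E\<leftarrow>Es. ereal (den E x))"
    by (induction Es) auto
  from SumE show ?case
    unfolding bnds.simps den.simps fst_conv snd_conv ereal_sum by (intro conjI sum_list_mono) auto
next
  case (MaxE Es)
  have ereal_Max: "ereal (Max ((\<lambda>E. den E x) ` set Es)) = Max ((\<lambda>E. ereal (den E x)) ` set Es)"
    using MaxE.prems by (simp add: mono_Max_commute image_image mono_def)
  from MaxE show ?case
    unfolding bnds.simps den.simps set_map fst_conv snd_conv ereal_Max
    by (intro conjI Max_image_mono) auto
next
  case (Scale c E)
  then have "fst (bnds E C) \<le> ereal (den E x)" "ereal (den E x) \<le> snd (bnds E C)" by auto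
  from ereal_scale_bounds_mono[OF this, where c=c] show ?case by (cases "0 \<le> c") auto
next
  case (Bias b E)
  then show ?case
    unfolding bnds.simps den.simps fst_conv snd_conv plus_ereal.simps(1)[symmetric]
    by (intro conjI add_right_mono) auto
qed

lemma bnds_antimono:
  assumes "wf_lexpr E" "D \<subseteq> C"
  shows "fst (bnds E C) \<le> fst (bnds E D) \<and> snd (bnds E D) \<le> snd (bnds E C)"
  using assms(1)
proof (induction E)
  case (Affine w b)
  then show ?case using assms(2) by (simp add: INF_superset_mono SUP_subset_mono)
next
  case (SumE Es)
  then show ?case unfolding bnds.simps fst_conv snd_conv by (intro conjI sum_list_mono) auto
next
  case (MaxE Es)
  then show ?case unfolding bnds.simps set_map fst_conv snd_conv by (intro conjI Max_image_mono) auto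
next
  case (Scale c E)
  then have "fst (bnds E C) \<le> fst (bnds E D)" "snd (bnds E D) \<le> snd (bnds E C)" by auto
  from ereal_scale_bounds_mono[OF this, where c=c] show ?case by (cases "0 \<le> c") auto
next
  case (Bias b E)
  then show ?case unfolding bnds.simps fst_conv snd_conv by (intro conjI add_right_mono) auto
qed

definition valid_cell_bounds ::
  "'a set set \<Rightarrow> ('a set \<Rightarrow> ereal) \<Rightarrow> ('a set \<Rightarrow> ereal) \<Rightarrow> ('a \<Rightarrow> real) \<Rightarrow> bool" where
  "valid_cell_bounds L lo up f \<longleftrightarrow>
     (\<forall>C\<in>L. lo C \<le> (INF x\<in>C. ereal (f x)) \<and> (SUP x\<in>C. ereal (f x)) \<le> up C)"

definition refines ::
  "'a set set \<Rightarrow> ('a set \<Rightarrow> ereal) \<Rightarrow> ('a set \<Rightarrow> ereal)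
   \<Rightarrow> 'a set set \<Rightarrow> ('a set \<Rightarrow> ereal) \<Rightarrow> ('a set \<Rightarrow> ereal) \<Rightarrow> bool" where
  "refines L' lo' up' L lo up \<longleftrightarrow>
     (\<forall>C\<in>L. \<forall>x\<in>C. \<exists>D\<in>L'. x \<in> D \<and> lo C \<le> lo' D \<and> up' D \<le> up C)"

lemma envelopes_enclose:
  assumes "valid_cell_bounds L lo up f"
  shows "lower_env L lo x \<le> ereal (f x) \<and> ereal (f x) \<le> upper_env L up x"
proof
  show "lower_env L lo x \<le> ereal (f x)"
    unfolding lower_env_def
  proof (rule SUP_least)
    fix C assume C: "C \<in> {C \<in> L. x \<in> C}"
    then have "lo C \<le> (INF y\<in>C. ereal (f y))" using assms by (simp add: valid_cell_bounds_def)
    also have "\<dots> \<le> ereal (f x)" using C by (auto intro: INF_lower)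
    finally show "lo C \<le> ereal (f x)" .
  qed
  show "ereal (f x) \<le> upper_env L up x"
    unfolding upper_env_def
  proof (rule INF_greatest)
    fix C assume C: "C \<in> {C \<in> L. x \<in> C}"
    then have "ereal (f x) \<le> (SUP y\<in>C. ereal (f y))" by (auto intro: SUP_upper)
    also have "\<dots> \<le> up C" using C assms by (simp add: valid_cell_bounds_def)
    finally show "ereal (f x) \<le> up C" .
  qed
qed

lemma envelopes_refine:
  assumes "refines L' lo' up' L lo up"
  shows "lower_env L lo x \<le> lower_env L' lo' x \<and> upper_env L' up' x \<le> upper_env L up x"
proof
  show "lower_env L lo x \<le> lower_env L' lo' x"
    unfolding lower_env_def
  proof (rule SUP_least)
    fix C assume "C \<in> {C \<in> L. x \<in> C}"
    then obtain D where "D \<in> L'" "x \<in> D" "lo C \<le> lo' D"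
      using assms by (auto simp: refines_def)
    then show "lo C \<le> (SUP D\<in>{D \<in> L'. x \<in> D}. lo' D)"
      by (auto intro: SUP_upper2)
  qed
  show "upper_env L' up' x \<le> upper_env L up x"
    unfolding upper_env_def
  proof (rule INF_greatest)
    fix C assume "C \<in> {C \<in> L. x \<in> C}"
    then obtain D where "D \<in> L'" "x \<in> D" "up' D \<le> up C"
      using assms by (auto simp: refines_def)
    then show "(INF D\<in>{D \<in> L'. x \<in> D}. up' D) \<le> up C"
      by (auto intro: INF_lower2)
  qed
qed

lemma valid_cell_bounds_LB_UB:
  assumes "wf_lexpr E" "\<forall>C\<in>L. lo C = LB E C \<and> up C = UB E C"
  shows "valid_cell_bounds L lo up (den E)"
  unfolding valid_cell_bounds_def
proof (intro ballI conjI)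
  fix C assume "C \<in> L"
  then have "lo C = fst (bnds E C)" "up C = snd (bnds E C)"
    using assms(2) by (auto simp: LB_def UB_def)
  then show "lo C \<le> (INF x\<in>C. ereal (den E x))" "(SUP x\<in>C. ereal (den E x)) \<le> up C"
    using bnds_enclose_den[OF assms(1)] by (auto intro!: INF_greatest SUP_least)
qed

lemma split_step_valid:
  "wf_lexpr E \<Longrightarrow> split_step E L lo up L' lo' up' \<Longrightarrow> valid_cell_bounds L' lo' up' (den E)"
  by (simp add: split_step_def valid_cell_bounds_LB_UB)

lemma split_step_refines:
  assumes wf: "wf_lexpr E" and step: "split_step E L lo up L' lo' up'"
  shows "refines L' lo' up' L lo up"
  unfolding refines_def
proof (intro ballI)
  fix C x assume "C \<in> L" "x \<in> C"
  have old: "\<forall>C\<in>L. lo C = LB E C \<and> up C = UB E C"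
    and new: "\<forall>D\<in>L'. lo' D = LB E D \<and> up' D = UB E D"
    using step unfolding split_step_def by simp_all
  from step obtain C0 a d where L': "L' = (L - {C0}) \<union>
      {D \<in> {C0 \<inter> {y. a \<bullet> y \<le> d}, C0 \<inter> {y. a \<bullet> y \<ge> d}}. D \<noteq> {}}"
    unfolding split_step_def by (elim conjE bexE exE)
  obtain D where D: "D \<in> L'" "x \<in> D" "D \<subseteq> C"
  proof (cases "C = C0")
    case False
    then show ?thesis using that[of C] L' \<open>C \<in> L\<close> \<open>x \<in> C\<close> by blast
  next
    case True
    define H where "H = C \<inter> (if a \<bullet> x \<le> d then {y. a \<bullet> y \<le> d} else {y. a \<bullet> y \<ge> d})"
    have "x \<in> H" "H \<subseteq> C" using \<open>x \<in> C\<close> by (auto simp: H_def)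
    moreover have "H \<in> L'"
      using \<open>x \<in> H\<close> unfolding L' H_def True by (cases "a \<bullet> x \<le> d") auto
    ultimately show ?thesis using that by blast
  qed
  then show "\<exists>D\<in>L'. x \<in> D \<and> lo C \<le> lo' D \<and> up' D \<le> up C"
    using old new \<open>C \<in> L\<close> bnds_antimono[OF wf \<open>D \<subseteq> C\<close>] by (auto simp: LB_def UB_def)
qed

lemma tighten_step_valid:
  assumes valid: "valid_cell_bounds L lo up (den E)" and step: "tighten_step E L lo up L' lo' up'"
  shows "valid_cell_bounds L' lo' up' (den E)"
proof -
  from step obtain C0 v where "L' = L" and
    "(v \<le> (INF x\<in>C0. ereal (den E x)) \<and> lo' = lo(C0 := v) \<and> up' = up) \<or>
     ((SUP x\<in>C0. ereal (den E x)) \<le> v \<and> up' = up(C0 := v) \<and> lo' = lo)"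
    unfolding tighten_step_def by blast
  then show ?thesis
    using valid unfolding valid_cell_bounds_def by (elim disjE) auto
qed

lemma tighten_step_refines:
  assumes step: "tighten_step E L lo up L' lo' up'"
  shows "refines L' lo' up' L lo up"
proof -
  from step obtain C0 v where "L' = L" and tightened:
    "(lo C0 < v \<and> v \<le> (INF x\<in>C0. ereal (den E x)) \<and> lo' = lo(C0 := v) \<and> up' = up) \<or>
     (v < up C0 \<and> (SUP x\<in>C0. ereal (den E x)) \<le> v \<and> up' = up(C0 := v) \<and> lo' = lo)"
    unfolding tighten_step_def by blast
  have "lo C \<le> lo' C \<and> up' C \<le> up C" for C
    using tightened by (cases "C = C0") auto
  then show ?thesis
    unfolding refines_def \<open>L' = L\<close> by fast
qed

theorem mainTheorem9:
  fixes E :: "('n::finite) lexpr"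
    and L L' :: "(real^'n) set set"
    and lo up lo' up' :: "(real^'n) set \<Rightarrow> ereal"
  assumes wf: "wf_lexpr E"
    and finL: "finite L"
    and polyL: "\<forall>C\<in>L. polyhedron C \<and> C \<noteq> {}"
    and valid: "\<forall>C\<in>L. lo C \<le> (INF x\<in>C. ereal (den E x)) \<and> (SUP x\<in>C. ereal (den E x)) \<le> up C"
    and step: "split_step E L lo up L' lo' up' \<or> tighten_step E L lo up L' lo' up'"
  shows "(\<forall>x. lower_env L lo x \<le> lower_env L' lo' x \<and> upper_env L' up' x \<le> upper_env L up x)
       \<and> (\<forall>x. lower_env L' lo' x \<le> ereal (den E x) \<and> ereal (den E x) \<le> upper_env L' up' x)"
proof -
  have "refines L' lo' up' L lo up \<and> valid_cell_bounds L' lo' up' (den E)"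
    using step
  proof
    assume "split_step E L lo up L' lo' up'"
    then show ?thesis using wf split_step_refines split_step_valid by blast
  next
    assume "tighten_step E L lo up L' lo' up'"
    moreover have "valid_cell_bounds L lo up (den E)"
      using valid by (simp add: valid_cell_bounds_def)
    ultimately show ?thesis using tighten_step_refines tighten_step_valid by blast
  qed
  then show ?thesis using envelopes_refine envelopes_enclose by blast
qed

end
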